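(* Let $c\in\mathbb{C}$ and consider the complex system \[ \dot z = z+\tfrac{1}{36}\big(-9c z^2+18czw-9cw^2-2c^2z^3+6c^2z^2w-6c^2zw^2+2c^2w^3\big), \] \[ \dot w = -w+\tfrac{1}{36}\big(9c z^2-18czw+9cw^2-2c^2z^3+6c^2z^2w-6c^2zw^2+2c^2w^3\big). \] Put \[ l_1=z-\tfrac{c}{12}(z-w)^2,\quad l_2=w-\tfrac{c}{12}(z-w)^2,\quad l_3=1-\tfrac{2c}{3}(z+w)+\tfrac{2c^2}{9}(z-w)^2,\quad l_4=1-\tfrac{c}{3}(z+w)+\tfrac{c^2}{18}(z-w)^2 . \] Then $l_1,\dots,l_4$ are Darboux factors of the system and the analytic change of coordinates $z_1=l_1l_3l_4^{-3}$, $w_1=l_2l_3l_4^{-3}$ (defined near the origin) transforms the system into $\dot z_1=z_1$, $\dot w_1=-w_1$.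
   Context: A Darboux factor of a system $\dot z = F(z,w)$, $\dot w = G(z,w)$ is a polynomial $f(z,w)$ such that $f_zF+f_wG=Kf$ for some polynomial $K$, called its cofactor. *)

theory Defs
  imports "HOL-Analysis.Analysis" "HOL-Computational_Algebra.Polynomial"
begin

text \<open>Bivariate polynomials in z, w over the complex numbers are represented as
  complex poly poly: the outer variable is w, coefficients are polynomials in z.\<close>

type_synonym bipoly = "complex poly poly"

definition varZ :: bipoly where "varZ = [:[:0, 1:]:]"
definition varW :: bipoly where "varW = [:0, 1:]"
definition cst :: "complex \<Rightarrow> bipoly" where "cst a = [:[:a:]:]"

definition eval2 :: "bipoly \<Rightarrow> complex \<Rightarrow> complex \<Rightarrow> complex" where
  "eval2 P z w = poly (poly P [:w:]) z"

definition dZ :: "bipoly \<Rightarrow> bipoly" where "dZ P = map_poly pderiv P"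
definition dW :: "bipoly \<Rightarrow> bipoly" where "dW P = pderiv P"

definition darboux_factor :: "bipoly \<Rightarrow> bipoly \<Rightarrow> bipoly \<Rightarrow> bool" where
  "darboux_factor F G f \<longleftrightarrow> (\<exists>K. dZ f * F + dW f * G = K * f)"

definition sysF :: "complex \<Rightarrow> bipoly" where
  "sysF c = varZ + cst (1/36) * (- cst (9*c) * varZ^2 + cst (18*c) * varZ * varW
     - cst (9*c) * varW^2 - cst (2*c^2) * varZ^3 + cst (6*c^2) * varZ^2 * varW
     - cst (6*c^2) * varZ * varW^2 + cst (2*c^2) * varW^3)"

definition sysG :: "complex \<Rightarrow> bipoly" where
  "sysG c = - varW + cst (1/36) * (cst (9*c) * varZ^2 - cst (18*c) * varZ * varW
     + cst (9*c) * varW^2 - cst (2*c^2) * varZ^3 + cst (6*c^2) * varZ^2 * varW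
     - cst (6*c^2) * varZ * varW^2 + cst (2*c^2) * varW^3)"

definition l1 :: "complex \<Rightarrow> bipoly" where
  "l1 c = varZ - cst (c/12) * (varZ - varW)^2"
definition l2 :: "complex \<Rightarrow> bipoly" where
  "l2 c = varW - cst (c/12) * (varZ - varW)^2"
definition l3 :: "complex \<Rightarrow> bipoly" where
  "l3 c = 1 - cst (2*c/3) * (varZ + varW) + cst (2*c^2/9) * (varZ - varW)^2"
definition l4 :: "complex \<Rightarrow> bipoly" where
  "l4 c = 1 - cst (c/3) * (varZ + varW) + cst (c^2/18) * (varZ - varW)^2"

definition vfield :: "complex \<Rightarrow> complex \<times> complex \<Rightarrow> complex \<times> complex" where
  "vfield c p = (eval2 (sysF c) (fst p) (snd p), eval2 (sysG c) (fst p) (snd p))"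

definition coordchange :: "complex \<Rightarrow> complex \<times> complex \<Rightarrow> complex \<times> complex" where
  "coordchange c p =
     (let z = fst p; w = snd p in
      (eval2 (l1 c) z w * eval2 (l3 c) z w / (eval2 (l4 c) z w) ^ 3,
       eval2 (l2 c) z w * eval2 (l3 c) z w / (eval2 (l4 c) z w) ^ 3))"

end

theory Submission
  imports Defs
begin

text \<open>The factors satisfy \<open>\<dot>l\<^sub>i = K\<^sub>i l\<^sub>i\<close> with cofactors \<open>K\<^sub>1 = 1 + k\<close>, \<open>K\<^sub>2 = -1 + k\<close>,
  \<open>K\<^sub>3 = 2k\<close>, \<open>K\<^sub>4 = k\<close>, where \<open>k = c(w - z)/3\<close>. Along the flow, the logarithmic derivative
  of \<open>l\<^sub>i l\<^sub>3 l\<^sub>4\<^sup>-\<^sup>3\<close> is therefore \<open>K\<^sub>i + K\<^sub>3 - 3K\<^sub>4\<close>, i.e. \<open>1\<close> for \<open>z\<^sub>1\<close> and \<open>-1\<close> for \<open>w\<^sub>1\<close>.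
  Since \<open>l\<^sub>3 = l\<^sub>4 = 1\<close> and \<open>l\<^sub>1 = z, l\<^sub>2 = w\<close> to first order at the origin, the coordinate
  change is tangent to the identity there.\<close>

lemma eval2_simps [simp]:
  "eval2 (P + Q) z w = eval2 P z w + eval2 Q z w"
  "eval2 (P - Q) z w = eval2 P z w - eval2 Q z w"
  "eval2 (P * Q) z w = eval2 P z w * eval2 Q z w"
  "eval2 (- P) z w = - eval2 P z w"
  "eval2 (P ^ n) z w = eval2 P z w ^ n"
  "eval2 1 z w = 1" "eval2 0 z w = 0"
  "eval2 varZ z w = z" "eval2 varW z w = w" "eval2 (cst a) z w = a"
  by (simp_all add: eval2_def varZ_def varW_def cst_def poly_power)

lemma eval2_numeral [simp]: "eval2 (numeral n) z w = numeral n"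
  by (simp add: eval2_def)

lemma eval2_pCons: "eval2 (pCons a Q) z w = poly a z + w * eval2 Q z w"
  by (simp add: eval2_def)

lemma eval2_eq_poly_map_poly: "eval2 P z w = poly (map_poly (\<lambda>r. poly r z) P) w"
  by (induction P) (auto simp: eval2_def map_poly_pCons)

lemma bipoly_eqI:
  assumes "\<And>z w. eval2 P z w = eval2 Q z w"
  shows "P = Q"
proof -
  have "\<And>z w. poly (map_poly (\<lambda>r. poly r z) (P - Q)) w = 0"
    using assms by (simp flip: eval2_eq_poly_map_poly)
  then have "\<And>z. map_poly (\<lambda>r. poly r z) (P - Q) = 0"
    using poly_all_0_iff_0 by blast
  then have "\<And>z i. poly (coeff (P - Q) i) z = 0"
    by (metis coeff_0 coeff_map_poly poly_0)
  then have "\<And>i. coeff (P - Q) i = 0"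
    using poly_all_0_iff_0 by blast
  then show ?thesis
    by (metis poly_eqI coeff_0 right_minus_eq)
qed

lemma dZ_add [simp]: "dZ (P + Q) = dZ P + dZ Q"
  by (rule poly_eqI) (simp add: dZ_def coeff_map_poly pderiv_add)

lemma dZ_minus [simp]: "dZ (- P) = - dZ P"
  by (rule poly_eqI) (simp add: dZ_def coeff_map_poly pderiv_minus)

lemma dZ_diff [simp]: "dZ (P - Q) = dZ P - dZ Q"
  by (rule poly_eqI) (simp add: dZ_def coeff_map_poly pderiv_diff)

lemma dZ_smult: "dZ (smult a Q) = smult (pderiv a) Q + smult a (dZ Q)"
  by (rule poly_eqI) (simp add: dZ_def coeff_map_poly pderiv_mult)

lemma dZ_pCons: "dZ (pCons a Q) = pCons (pderiv a) (dZ Q)"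
  by (simp add: dZ_def map_poly_pCons)

lemma dZ_mult [simp]: "dZ (P * Q) = dZ P * Q + P * dZ Q"
  by (induction P) (simp_all add: dZ_def [of 0] dZ_smult dZ_pCons algebra_simps)

lemma dZ_basic [simp]: "dZ varZ = 1" "dZ varW = 0" "dZ (cst a) = 0" "dZ 1 = 0"
  by (simp_all add: dZ_def varZ_def varW_def cst_def one_pCons pderiv_pCons map_poly_pCons)

lemma dW_basic [simp]: "dW varZ = 0" "dW varW = 1" "dW (cst a) = 0" "dW 1 = 0"
  by (simp_all add: dW_def varZ_def varW_def cst_def one_pCons pderiv_pCons)

lemma dW_ops [simp]:
  "dW (P + Q) = dW P + dW Q" "dW (P - Q) = dW P - dW Q"
  "dW (- P) = - dW P" "dW (P * Q) = dW P * Q + P * dW Q"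
  by (simp_all add: dW_def pderiv_add pderiv_diff pderiv_minus pderiv_mult)

definition lie_deriv :: "bipoly \<Rightarrow> bipoly \<Rightarrow> bipoly \<Rightarrow> bipoly" where
  "lie_deriv F G P = dZ P * F + dW P * G"

lemma darboux_factorI: "lie_deriv F G f = K * f \<Longrightarrow> darboux_factor F G f"
  unfolding darboux_factor_def lie_deriv_def by blast

lemma lie_deriv_l1: "lie_deriv (sysF c) (sysG c) (l1 c) = (1 + cst (c/3) * (varW - varZ)) * l1 c"
  by (rule bipoly_eqI, simp add: lie_deriv_def l1_def sysF_def sysG_def power2_eq_square power3_eq_cube)
    (simp add: field_simps)

lemma lie_deriv_l2: "lie_deriv (sysF c) (sysG c) (l2 c) = (- 1 + cst (c/3) * (varW - varZ)) * l2 c"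
  by (rule bipoly_eqI, simp add: lie_deriv_def l2_def sysF_def sysG_def power2_eq_square power3_eq_cube)
    (simp add: field_simps)

lemma lie_deriv_l3: "lie_deriv (sysF c) (sysG c) (l3 c) = cst (2*c/3) * (varW - varZ) * l3 c"
  by (rule bipoly_eqI, simp add: lie_deriv_def l3_def sysF_def sysG_def power2_eq_square power3_eq_cube)
    (simp add: field_simps)

lemma lie_deriv_l4: "lie_deriv (sysF c) (sysG c) (l4 c) = cst (c/3) * (varW - varZ) * l4 c"
  by (rule bipoly_eqI, simp add: lie_deriv_def l4_def sysF_def sysG_def power2_eq_square power3_eq_cube)
    (simp add: field_simps)

definition eval2_pair :: "bipoly \<Rightarrow> complex \<times> complex \<Rightarrow> complex" where
  "eval2_pair P p = eval2 P (fst p) (snd p)"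

lemma eval2_pair_has_derivative:
  "(eval2_pair P has_derivative
     (\<lambda>v. eval2_pair (dZ P) p * fst v + eval2_pair (dW P) p * snd v)) (at p)"
  unfolding eval2_pair_def
proof (induction P)
  case 0
  then show ?case by (simp add: dZ_def dW_def eval2_def)
next
  case (pCons a Q)
  have "((\<lambda>x. poly a (fst x)) has_derivative (\<lambda>v. poly (pderiv a) (fst p) * fst v)) (at p)"
    by (rule has_derivative_compose [OF has_derivative_fst [OF has_derivative_ident]
          poly_DERIV [of a "fst p", unfolded has_field_derivative_def]])
  then have "((\<lambda>x. poly a (fst x) + snd x * eval2 Q (fst x) (snd x)) has_derivative
     (\<lambda>v. poly (pderiv a) (fst p) * fst v + (snd p * (eval2 (dZ Q) (fst p) (snd p) * fst v
       + eval2 (dW Q) (fst p) (snd p) * snd v) + snd v * eval2 Q (fst p) (snd p)))) (at p)"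
    by (intro derivative_intros pCons)
  then show ?case
    by (simp add: eval2_pCons dZ_pCons dW_def pderiv_pCons algebra_simps)
qed

lemma eval2_pair_derivative_along_field:
  assumes "lie_deriv F G P = K * P"
  shows "eval2_pair (dZ P) p * eval2 F (fst p) (snd p) + eval2_pair (dW P) p * eval2 G (fst p) (snd p)
    = eval2_pair K p * eval2_pair P p"
  using arg_cong [OF assms, of "\<lambda>R. eval2_pair R p"] by (simp add: eval2_pair_def lie_deriv_def)

lemma has_derivative_mult_divide_power:
  fixes f g h :: "'a::real_normed_vector \<Rightarrow> 'b::real_normed_field"
  assumes "(f has_derivative f') (at x within S)" "(g has_derivative g') (at x within S)"
    and "(h has_derivative h') (at x within S)" "h x \<noteq> 0"
  shows "((\<lambda>y. f y * g y / h y ^ n) has_derivative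
    (\<lambda>v. (f' v * g x + f x * g' v) / h x ^ n - of_nat n * h' v * (f x * g x) / h x ^ Suc n))
    (at x within S)"
proof (rule has_derivative_eq_rhs)
  show "((\<lambda>y. f y * g y / h y ^ n) has_derivative
    (\<lambda>v. ((f x * g' v + f' v * g x) * h x ^ n - f x * g x * (of_nat n * h' v * h x ^ (n - 1)))
      / (h x ^ n * h x ^ n))) (at x within S)"
    using assms by (intro derivative_intros) auto
  show "(\<lambda>v. ((f x * g' v + f' v * g x) * h x ^ n - f x * g x * (of_nat n * h' v * h x ^ (n - 1)))
      / (h x ^ n * h x ^ n))
    = (\<lambda>v. (f' v * g x + f x * g' v) / h x ^ n - of_nat n * h' v * (f x * g x) / h x ^ Suc n)"
    using assms(4) by (cases n) (simp_all add: fun_eq_iff field_simps)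
qed

lemma coordchange_eq:
  "coordchange c = (\<lambda>p. (eval2_pair (l1 c) p * eval2_pair (l3 c) p / eval2_pair (l4 c) p ^ 3,
                          eval2_pair (l2 c) p * eval2_pair (l3 c) p / eval2_pair (l4 c) p ^ 3))"
  by (simp add: coordchange_def eval2_pair_def Let_def fun_eq_iff)

lemma coordchange_origin: "coordchange c (0, 0) = (0, 0)"
  by (simp add: coordchange_def l1_def l2_def)

lemma coordchange_has_derivative_id: "(coordchange c has_derivative id) (at (0, 0))"
proof -
  have at_origin: "eval2_pair (l1 c) (0, 0) = 0" "eval2_pair (l2 c) (0, 0) = 0"
    "eval2_pair (l3 c) (0, 0) = 1" "eval2_pair (l4 c) (0, 0) = 1"
    by (simp_all add: eval2_pair_def l1_def l2_def l3_def l4_def)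
  have "((\<lambda>p. eval2_pair P p * eval2_pair (l3 c) p / eval2_pair (l4 c) p ^ 3) has_derivative
      (\<lambda>v. eval2_pair (dZ P) (0, 0) * fst v + eval2_pair (dW P) (0, 0) * snd v)) (at (0, 0))"
    if "eval2_pair P (0, 0) = 0" for P
    using has_derivative_mult_divide_power [OF eval2_pair_has_derivative eval2_pair_has_derivative
        eval2_pair_has_derivative, of "l4 c" "(0, 0)" P "l3 c" 3]
    by (simp add: at_origin that)
  from has_derivative_Pair [OF this this, of "l1 c" "l2 c"]
  have "(coordchange c has_derivative (\<lambda>v. (fst v, snd v))) (at (0, 0))"
    unfolding coordchange_eq
    by (simp add: at_origin) (simp add: eval2_pair_def l1_def l2_def power2_eq_square)
  then show ?thesis
    by (simp add: id_def)
qed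

lemma coordchange_linearizes_vfield:
  assumes "eval2_pair (l4 c) p \<noteq> 0"
  shows "\<exists>D. (coordchange c has_derivative D) (at p)
    \<and> D (vfield c p) = (fst (coordchange c p), - snd (coordchange c p))"
proof -
  define d where "d P v = eval2_pair (dZ P) p * fst v + eval2_pair (dW P) p * snd v" for P v
  define k where "k = c/3 * (snd p - fst p)"
  have along: "d P (vfield c p) = eval2_pair K p * eval2_pair P p"
    if "lie_deriv (sysF c) (sysG c) P = K * P" for P K
    using eval2_pair_derivative_along_field [OF that, of p] by (simp add: d_def vfield_def)
  have eigen: "d (l1 c) (vfield c p) = (1 + k) * eval2_pair (l1 c) p"
    "d (l2 c) (vfield c p) = (- 1 + k) * eval2_pair (l2 c) p"
    "d (l3 c) (vfield c p) = (2 * k) * eval2_pair (l3 c) p"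
    "d (l4 c) (vfield c p) = k * eval2_pair (l4 c) p"
    by (simp_all add: along [OF lie_deriv_l1] along [OF lie_deriv_l2] along [OF lie_deriv_l3]
        along [OF lie_deriv_l4] eval2_pair_def k_def)
  have deriv: "(eval2_pair P has_derivative d P) (at p)" for P
    unfolding d_def by (rule eval2_pair_has_derivative)
  note ratio = has_derivative_mult_divide_power [OF deriv deriv deriv assms]
  show ?thesis
    unfolding coordchange_eq
    by (intro exI conjI, rule has_derivative_Pair [OF ratio ratio])
      (use assms in \<open>simp add: eigen field_simps eval_nat_numeral\<close>)
qed

theorem mainTheorem3:
  fixes c :: complex
  shows "darboux_factor (sysF c) (sysG c) (l1 c)
       \<and> darboux_factor (sysF c) (sysG c) (l2 c)
       \<and> darboux_factor (sysF c) (sysG c) (l3 c)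
       \<and> darboux_factor (sysF c) (sysG c) (l4 c)
       \<and> coordchange c (0, 0) = (0, 0)
       \<and> (coordchange c has_derivative id) (at (0, 0))
       \<and> (\<exists>U. open U \<and> (0, 0) \<in> U \<and>
             (\<forall>p\<in>U. eval2 (l4 c) (fst p) (snd p) \<noteq> 0 \<and>
                (\<exists>D. (coordchange c has_derivative D) (at p) \<and>
                     D (vfield c p) = (fst (coordchange c p), - snd (coordchange c p)))))"
proof -
  let ?U = "{p. eval2_pair (l4 c) p \<noteq> 0}"
  have "open ?U"
    by (intro open_Collect_neq has_derivative_continuous_on continuous_on_const)
      (rule eval2_pair_has_derivative)
  moreover have "(0, 0) \<in> ?U"
    by (simp add: eval2_pair_def l4_def)
  ultimately show ?thesis
    using lie_deriv_l1 lie_deriv_l2 lie_deriv_l3 lie_deriv_l4 coordchange_origin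
      coordchange_has_derivative_id coordchange_linearizes_vfield
    by (intro conjI darboux_factorI exI [of _ ?U]) (auto simp: eval2_pair_def)
qed

end
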